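(* Consider simple tornado hashing, i.e. a random tornado tabulation hash function with $d$ derived characters in which $\tilde h_0\equiv0$. Let $M$ be a partial matching on $\Sigma^c$ and let $i\in\{1,\dots,d\}$. Conditioned on $M$ being $(i-1)$-independent, $M$ is an $i$-matching with probability $1/|\Sigma|^{|M|}$.
   Context: Let $\Sigma=\{0,\dots,2^k-1\}$, identified with $k$-bit strings, $\oplus$ bitwise xor. A simple tabulation hash function $g:\Sigma^b\to\Sigma$ is $g(x_1\cdots x_b)=T_1[x_1]\oplus\cdots\oplus T_b[x_b]$ with independent fully random tables $T_i:\Sigma\to\Sigma$. Simple tornado hashing uses mutually independent simple tabulation functions $\tilde h_i:\Sigma^{c+i-1}\to\Sigma$, $i=1,\dots,d$; the derived key of $x=x_1\cdots x_c$ is $\tilde x=\tilde x_1\cdots\tilde x_{c+d}$ with $\tilde x_i=x_i$ for $i\le c$ and $\tilde x_i=\tilde h_{i-c}(\tilde x_1\cdots\tilde x_{i-1})$ for $i>c$. A generalized key is a subset of $\{1,\dots,c+d\}\times\Sigma$ (pairs are position characters); a key $y\in\Sigma^{c+d}$ is identified with $\{(j,y_j)\}$. For a generalized key $z$, $z[\le j]=\{(l,a)\in z: l\le j\}$. A set of generalized keys is linearly independent if no nonempty subset of it has empty symmetric difference (i.e., no nonempty subset in which every position character occurs an even number of times). A partial matching $M$ on $\Sigma^c$ is a set of pairwise disjoint unordered pairs $\{x,y\}$ of distinct keys. $M$ is an $i$-matching if $\tilde x_{c+i}=\tilde y_{c+i}$ for every $\{x,y\}\in M$. $M$ is $j$-independent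 if the set $\{(\tilde x\triangle\tilde y)[\le c+j]:\{x,y\}\in M\}$ is linearly independent (where $\triangle$ is symmetric difference of position-character sets) and consists of $|M|$ distinct elements. *)

theory Defs
  imports "HOL-Probability.Probability"
begin

text \<open>Alphabet \<Sigma> = {0..<2^k}; characters are nats, xor is bitwise xor on nat.
Keys are lists; position j (1-based) of a list y is y ! (j-1).
A table family T assigns to (i, j, a) the value T_{i,j}[a] of the j-th table of the
i-th simple tabulation function \<tilde>h_i, for 1 \<le> i \<le> d, 1 \<le> j \<le> c+i-1, a \<in> \<Sigma>.\<close>

definition Sigma_set :: "nat \<Rightarrow> nat set" where
  "Sigma_set k = {..<2^k}"

definition keys :: "nat \<Rightarrow> nat \<Rightarrow> nat list set" where
  "keys k c = {x. length x = c \<and> set x \<subseteq> Sigma_set k}"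

definition table_dom :: "nat \<Rightarrow> nat \<Rightarrow> nat \<Rightarrow> (nat \<times> nat \<times> nat) set" where
  "table_dom k c d = {(i, j, a). 1 \<le> i \<and> i \<le> d \<and> 1 \<le> j \<and> j \<le> c + i - 1 \<and> a \<in> Sigma_set k}"

definition tables :: "nat \<Rightarrow> nat \<Rightarrow> nat \<Rightarrow> (nat \<times> nat \<times> nat \<Rightarrow> nat) set" where
  "tables k c d = PiE (table_dom k c d) (\<lambda>_. Sigma_set k)"

definition tornado_pmf :: "nat \<Rightarrow> nat \<Rightarrow> nat \<Rightarrow> (nat \<times> nat \<times> nat \<Rightarrow> nat) pmf" where
  "tornado_pmf k c d = pmf_of_set (tables k c d)"

definition htab :: "(nat \<times> nat \<times> nat \<Rightarrow> nat) \<Rightarrow> nat \<Rightarrow> nat list \<Rightarrow> nat" where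
  "htab T i y = foldr (\<lambda>j acc. xor (T (i, j, y ! (j - 1))) acc) [1..<length y + 1] 0"

fun ext :: "(nat \<times> nat \<times> nat \<Rightarrow> nat) \<Rightarrow> nat \<Rightarrow> nat list \<Rightarrow> nat list" where
  "ext T 0 x = x"
| "ext T (Suc n) x = (let y = ext T n x in y @ [htab T (Suc n) y])"

text \<open>Derived key \<tilde>x \<in> \<Sigma>^{c+d} under simple tornado hashing (\<tilde>h_0 \<equiv> 0).\<close>
definition derived :: "(nat \<times> nat \<times> nat \<Rightarrow> nat) \<Rightarrow> nat \<Rightarrow> nat list \<Rightarrow> nat list" where
  "derived T d x = ext T d x"

text \<open>Position characters of a key; generalized keys are sets of position characters.\<close>
definition pchars :: "nat list \<Rightarrow> (nat \<times> nat) set" where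
  "pchars y = {(j, y ! (j - 1)) | j. 1 \<le> j \<and> j \<le> length y}"

definition upto_pos :: "(nat \<times> nat) set \<Rightarrow> nat \<Rightarrow> (nat \<times> nat) set" where
  "upto_pos z j = {(l, a) \<in> z. l \<le> j}"

definition symdiff :: "'a set \<Rightarrow> 'a set \<Rightarrow> 'a set" where
  "symdiff A B = (A - B) \<union> (B - A)"

definition lin_indep :: "(nat \<times> nat) set set \<Rightarrow> bool" where
  "lin_indep S \<longleftrightarrow> (\<forall>S' \<subseteq> S. S' \<noteq> {} \<longrightarrow>
      \<not> (\<forall>p. even (card {z \<in> S'. p \<in> z})))"

definition partial_matching :: "nat \<Rightarrow> nat \<Rightarrow> nat list set set \<Rightarrow> bool" where
  "partial_matching k c M \<longleftrightarrow>
     (\<forall>e \<in> M. \<exists>x y. e = {x, y} \<and> x \<noteq> y \<and> x \<in> keys k c \<and> y \<in> keys k c) \<and>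
     (\<forall>e \<in> M. \<forall>e' \<in> M. e \<noteq> e' \<longrightarrow> e \<inter> e' = {})"

definition is_i_matching ::
  "(nat \<times> nat \<times> nat \<Rightarrow> nat) \<Rightarrow> nat \<Rightarrow> nat \<Rightarrow> nat list set set \<Rightarrow> nat \<Rightarrow> bool" where
  "is_i_matching T c d M i \<longleftrightarrow>
     (\<forall>x y. {x, y} \<in> M \<longrightarrow> derived T d x ! (c + i - 1) = derived T d y ! (c + i - 1))"

definition diff_keys ::
  "(nat \<times> nat \<times> nat \<Rightarrow> nat) \<Rightarrow> nat \<Rightarrow> nat \<Rightarrow> nat list set set \<Rightarrow> nat \<Rightarrow> (nat \<times> nat) set set" where
  "diff_keys T c d M j =
     {upto_pos (symdiff (pchars (derived T d x)) (pchars (derived T d y))) (c + j) | x y. {x, y} \<in> M}"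

definition is_j_independent ::
  "(nat \<times> nat \<times> nat \<Rightarrow> nat) \<Rightarrow> nat \<Rightarrow> nat \<Rightarrow> nat list set set \<Rightarrow> nat \<Rightarrow> bool" where
  "is_j_independent T c d M j \<longleftrightarrow>
     lin_indep (diff_keys T c d M j) \<and> card (diff_keys T c d M j) = card M"

end

theory Submission
  imports Defs
begin

(* Fix all tables except the table of \<tilde>h_i.  They determine the first c + i - 1 derived
   characters of every key, hence whether M is (i-1)-independent and the generalized keys
   z_xy = (\<tilde>x \<triangle> \<tilde>y)[\<le> c+i-1].  Since \<tilde>x_{c+i} XOR \<tilde>y_{c+i} is the XOR of the entries of the
   i-th table at the position characters of z_xy, M is an i-matching iff this fresh, uniformly
   random table solves a homogeneous system of |M| linear equations over GF(2)^k.  When the z_xy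
   are linearly independent the system has full rank, so a 1/|\<Sigma>|^|M| fraction of all
   tables solve it. *)

unbundle bit_operations_syntax

global_interpretation xor_sum: comm_monoid_set "(XOR)" "0::nat"
  defines xor_sum = xor_sum.F
  by unfold_locales

lemma xor_xor_cancel_right [simp]: "((a::nat) XOR b) XOR b = a"
  by (simp add: xor.assoc)

lemma xor_eq_0_iff: "((a::nat) XOR b = 0) \<longleftrightarrow> a = b"
  by (metis xor_xor_cancel_right xor.left_neutral)

lemma xor_less_power: "(a::nat) < 2 ^ k \<Longrightarrow> b < 2 ^ k \<Longrightarrow> a XOR b < 2 ^ k"
  by (metis take_bit_nat_eq_self_iff take_bit_xor)

lemma xor_sum_less_power: "(\<And>p. p \<in> A \<Longrightarrow> S p < 2 ^ k) \<Longrightarrow> xor_sum S A < 2 ^ k"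
  by (induction A rule: infinite_finite_induct) (simp_all add: xor_less_power)

lemma xor_sum_symdiff:
  assumes "finite A" "finite B"
  shows "xor_sum S (symdiff A B) = xor_sum S A XOR xor_sum S B"
proof -
  have split: "xor_sum S X = xor_sum S (X - Y) XOR xor_sum S (X \<inter> Y)" if "finite X" for X Y
  proof -
    have "xor_sum S (X - Y) XOR xor_sum S (X \<inter> Y) = xor_sum S ((X - Y) \<union> (X \<inter> Y))"
      using that by (intro xor_sum.union_disjoint[symmetric]) auto
    then show ?thesis by (simp add: Un_Diff_Int)
  qed
  have "xor_sum S (symdiff A B) = xor_sum S (A - B) XOR xor_sum S (B - A)"
    unfolding symdiff_def using assms by (intro xor_sum.union_disjoint) auto
  then show ?thesis
    using split[OF assms(1), of B] split[OF assms(2), of A]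
    by (metis Int_commute xor.assoc xor.commute xor_xor_cancel_right)
qed

lemma even_card_symdiff_iff:
  assumes "finite A" "finite B"
  shows "even (card (symdiff A B)) \<longleftrightarrow> (even (card A) \<longleftrightarrow> even (card B))"
proof -
  have "card A = card (A - B) + card (A \<inter> B)" "card B = card (B - A) + card (A \<inter> B)"
    using assms card_Int_Diff[of A B] card_Int_Diff[of B A] by (simp_all add: Int_commute)
  moreover have "card (symdiff A B) = card (A - B) + card (B - A)"
    unfolding symdiff_def using assms by (intro card_Un_disjoint) auto
  ultimately show ?thesis by auto
qed

definition lin_indep_family :: "'e set \<Rightarrow> ('e \<Rightarrow> 'p set) \<Rightarrow> bool" where
  "lin_indep_family E D \<longleftrightarrow>
     (\<forall>E' \<subseteq> E. E' \<noteq> {} \<longrightarrow> (\<exists>p. odd (card {e \<in> E'. p \<in> D e})))"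

lemma lin_indep_family_id_iff: "lin_indep_family S id \<longleftrightarrow> lin_indep S"
  by (simp add: lin_indep_family_def lin_indep_def)

lemma lin_indep_family_image:
  assumes "inj f" "lin_indep_family E D"
  shows "lin_indep_family E (\<lambda>e. f ` D e)"
  unfolding lin_indep_family_def
proof (intro allI impI)
  fix E' assume "E' \<subseteq> E" "E' \<noteq> {}"
  then obtain p where "odd (card {e \<in> E'. p \<in> D e})"
    using assms(2) unfolding lin_indep_family_def by blast
  then show "\<exists>q. odd (card {e \<in> E'. q \<in> f ` D e})"
    using inj_image_mem_iff[OF assms(1)] by (intro exI[of _ "f p"]) simp
qed

(* Eliminating p from every set but D e0 is a row operation: a dependency among the new sets
   lifts to one among the old sets, adding e0 iff an odd number of the sets involved contain p. *)
lemma lin_indep_family_eliminate: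
  assumes indep: "lin_indep_family (insert e0 E) D" and "e0 \<notin> E" "finite E" "p \<in> D e0"
  shows "lin_indep_family E (\<lambda>e. if p \<in> D e then symdiff (D e) (D e0) else D e)"
  unfolding lin_indep_family_def
proof (intro allI impI)
  let ?D' = "\<lambda>e. if p \<in> D e then symdiff (D e) (D e0) else D e"
  fix E' assume E': "E' \<subseteq> E" "E' \<noteq> {}"
  have "finite E'" using E' \<open>finite E\<close> finite_subset by blast
  let ?cnt = "\<lambda>q. card {e \<in> E'. q \<in> D e}"
  define E'' where "E'' = (if odd (?cnt p) then insert e0 E' else E')"
  have "E'' \<subseteq> insert e0 E" "E'' \<noteq> {}" using E' by (auto simp: E''_def)
  then obtain q where q: "odd (card {e \<in> E''. q \<in> D e})"
    using indep unfolding lin_indep_family_def by blast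
  have "e0 \<notin> E'" using E' \<open>e0 \<notin> E\<close> by blast
  moreover have "{e \<in> insert e0 E'. q \<in> D e}
      = (if q \<in> D e0 then insert e0 {e \<in> E'. q \<in> D e} else {e \<in> E'. q \<in> D e})"
    by auto
  ultimately have "card {e \<in> insert e0 E'. q \<in> D e} = (if q \<in> D e0 then Suc (?cnt q) else ?cnt q)"
    using \<open>finite E'\<close> by simp
  then have E''_cnt: "card {e \<in> E''. q \<in> D e}
      = (if odd (?cnt p) \<and> q \<in> D e0 then Suc (?cnt q) else ?cnt q)"
    by (simp add: E''_def)
  show "\<exists>q. odd (card {e \<in> E'. q \<in> ?D' e})"
  proof (intro exI[of _ q], cases "q \<in> D e0")
    case False
    then have "{e \<in> E'. q \<in> ?D' e} = {e \<in> E'. q \<in> D e}"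
      by (auto simp: symdiff_def)
    then show "odd (card {e \<in> E'. q \<in> ?D' e})"
      using q False E''_cnt by simp
  next
    case True
    then have "{e \<in> E'. q \<in> ?D' e} = symdiff {e \<in> E'. q \<in> D e} {e \<in> E'. p \<in> D e}"
      by (auto simp: symdiff_def)
    then show "odd (card {e \<in> E'. q \<in> ?D' e})"
      using q True E''_cnt even_card_symdiff_iff[of "{e \<in> E'. q \<in> D e}" "{e \<in> E'. p \<in> D e}"]
        \<open>finite E'\<close> by (auto split: if_splits)
  qed
qed

definition xor_solutions ::
    "nat \<Rightarrow> 'p set \<Rightarrow> 'e set \<Rightarrow> ('e \<Rightarrow> 'p set) \<Rightarrow> ('e \<Rightarrow> nat) \<Rightarrow> ('p \<Rightarrow> nat) set" where
  "xor_solutions k P E D t = {S \<in> PiE P (\<lambda>_. {..<2 ^ k}). \<forall>e\<in>E. xor_sum S (D e) = t e}"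

(* Back substitution: only the entry at the pivot p changes, and p occurs in no eliminated set. *)
lemma xor_solutions_back_substitute:
  assumes "finite P" "\<forall>e\<in>insert e0 E. D e \<subseteq> P" "p \<in> D e0" "t e0 < 2 ^ k"
    and S': "S' \<in> xor_solutions k P E (\<lambda>e. if p \<in> D e then symdiff (D e) (D e0) else D e)
                                  (\<lambda>e. if p \<in> D e then t e XOR t e0 else t e)"
  shows "S'(p := t e0 XOR xor_sum S' (D e0 - {p})) \<in> xor_solutions k P (insert e0 E) D t"
proof -
  define S where "S = S'(p := t e0 XOR xor_sum S' (D e0 - {p}))"
  define D' where "D' e = (if p \<in> D e then symdiff (D e) (D e0) else D e)" for e
  have fin_D: "finite (D e)" if "e \<in> insert e0 E" for e
    using assms(1,2) that finite_subset by blast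
  have "xor_sum S' (D e0 - {p}) < 2 ^ k"
    using S' assms(2) by (intro xor_sum_less_power) (auto simp: xor_solutions_def)
  then have S_PiE: "S \<in> PiE P (\<lambda>_. {..<2 ^ k})"
    using S' assms(2-4)
    by (auto simp: S_def xor_solutions_def PiE_def Pi_def extensional_def intro: xor_less_power)
  have S_D': "xor_sum S (D' e) = (if p \<in> D e then t e XOR t e0 else t e)" if "e \<in> E" for e
  proof -
    have "p \<notin> D' e" using assms(3) by (auto simp: D'_def symdiff_def)
    then have "xor_sum S (D' e) = xor_sum S' (D' e)" by (intro xor_sum.cong) (auto simp: S_def)
    then show ?thesis using S' that by (simp add: xor_solutions_def D'_def)
  qed
  have S_e0: "xor_sum S (D e0) = t e0"
  proof -
    have "xor_sum S (D e0) = S p XOR xor_sum S (D e0 - {p})"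
      using assms(3) fin_D by (subst xor_sum.remove) auto
    also have "xor_sum S (D e0 - {p}) = xor_sum S' (D e0 - {p})"
      by (intro xor_sum.cong) (auto simp: S_def)
    finally show ?thesis by (simp add: S_def)
  qed
  have "xor_sum S (D e) = t e" if "e \<in> E" for e
  proof (cases "p \<in> D e")
    case True
    then have "D e = symdiff (D' e) (D e0)" by (auto simp: D'_def symdiff_def)
    then have "xor_sum S (D e) = xor_sum S (symdiff (D' e) (D e0))" by (rule arg_cong)
    also have "\<dots> = xor_sum S (D' e) XOR xor_sum S (D e0)"
      using fin_D that by (intro xor_sum_symdiff) (auto simp: D'_def symdiff_def)
    finally show ?thesis using S_D'[OF that] S_e0 True by simp
  next
    case False
    then show ?thesis using S_D'[OF that] by (simp add: D'_def)
  qed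
  then show ?thesis using S_PiE S_e0 by (simp add: S_def[symmetric] xor_solutions_def)
qed

lemma xor_solutions_nonempty:
  assumes "finite E" "finite P" "\<forall>e\<in>E. D e \<subseteq> P" "lin_indep_family E D" "\<forall>e\<in>E. t e < 2 ^ k"
  shows "xor_solutions k P E D t \<noteq> {}"
  using assms(1,3-5)
proof (induction E arbitrary: D t rule: finite_induct)
  case empty
  have "restrict (\<lambda>_. 0) P \<in> xor_solutions k P {} D t" by (simp add: xor_solutions_def)
  then show ?case by blast
next
  case (insert e0 E)
  obtain p where "odd (card {e \<in> {e0}. p \<in> D e})"
    using insert.prems(2) unfolding lin_indep_family_def by blast
  moreover have "{e \<in> {e0}. p \<in> D e} = (if p \<in> D e0 then {e0} else {})" by auto
  ultimately have p: "p \<in> D e0" by (simp split: if_splits)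
  let ?D' = "\<lambda>e. if p \<in> D e then symdiff (D e) (D e0) else D e"
  let ?t' = "\<lambda>e. if p \<in> D e then t e XOR t e0 else t e"
  have "\<forall>e\<in>E. ?D' e \<subseteq> P" using insert.prems(1) by (auto simp: symdiff_def)
  moreover have "lin_indep_family E ?D'"
    using insert.prems(2) insert.hyps(2,1) p by (rule lin_indep_family_eliminate)
  moreover have "\<forall>e\<in>E. ?t' e < 2 ^ k" using insert.prems(3) by (simp add: xor_less_power)
  ultimately have "xor_solutions k P E ?D' ?t' \<noteq> {}" by (rule insert.IH)
  then obtain S' where S': "S' \<in> xor_solutions k P E ?D' ?t'" by blast
  have "t e0 < 2 ^ k" using insert.prems(3) by simp
  from xor_solutions_back_substitute[OF assms(2) insert.prems(1) p this S']
  show ?case by blast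
qed

lemma card_xor_solutions_translate:
  assumes "\<forall>e\<in>E. D e \<subseteq> P" and "S0 \<in> xor_solutions k P E D t"
  shows "card (xor_solutions k P E D t) = card (xor_solutions k P E D (\<lambda>_. 0))"
proof -
  define shift where "shift S = (\<lambda>q. if q \<in> P then S q XOR S0 q else undefined)" for S
  have xor_sum_shift: "xor_sum (shift S) (D e) = xor_sum S (D e) XOR xor_sum S0 (D e)"
    if "e \<in> E" for S e
  proof -
    have "xor_sum (shift S) (D e) = xor_sum (\<lambda>q. S q XOR S0 q) (D e)"
      using assms(1) that by (intro xor_sum.cong) (auto simp: shift_def)
    then show ?thesis by (simp add: xor_sum.distrib)
  qed
  have shift_PiE: "shift S \<in> PiE P (\<lambda>_. {..<2 ^ k})" if "S \<in> PiE P (\<lambda>_. {..<2 ^ k})" for S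
    using that assms(2)
    by (auto simp: shift_def xor_solutions_def PiE_def Pi_def extensional_def
        intro!: xor_less_power)
  have shift_shift: "shift (shift S) = S" if "S \<in> PiE P (\<lambda>_. {..<2 ^ k})" for S
    using that by (auto simp: shift_def PiE_def extensional_def fun_eq_iff)
  have "bij_betw shift (xor_solutions k P E D (\<lambda>_. 0)) (xor_solutions k P E D t)"
    by (rule bij_betw_byWitness[where f' = shift])
      (use assms(2) shift_PiE shift_shift xor_sum_shift in \<open>auto simp: xor_solutions_def\<close>)
  then show ?thesis by (simp add: bij_betw_same_card)
qed

(* The solution sets are the fibres of the map S \<mapsto> (xor_sum S (D e))_e, which is onto by
   elimination; each fibre is a translate of the kernel. *)
lemma card_xor_solutions:
  assumes "finite E" "finite P" "\<forall>e\<in>E. D e \<subseteq> P" "lin_indep_family E D"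
  shows "card (xor_solutions k P E D (\<lambda>_. 0)) * (2 ^ k) ^ card E = (2 ^ k) ^ card P"
proof -
  let ?V = "\<lambda>X. PiE X (\<lambda>_. {..<(2::nat) ^ k})"
  have fibres: "?V P = (\<Union>t\<in>?V E. xor_solutions k P E D t)"
  proof (intro equalityI subsetI)
    fix S assume S: "S \<in> ?V P"
    then have "restrict (\<lambda>e. xor_sum S (D e)) E \<in> ?V E"
      using assms(3) by (auto intro!: xor_sum_less_power)
    moreover have "S \<in> xor_solutions k P E D (restrict (\<lambda>e. xor_sum S (D e)) E)"
      using S by (simp add: xor_solutions_def)
    ultimately show "S \<in> (\<Union>t\<in>?V E. xor_solutions k P E D t)" by blast
  qed (auto simp: xor_solutions_def)
  have disjoint: "xor_solutions k P E D t \<inter> xor_solutions k P E D t' = {}"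
    if "t \<in> ?V E" "t' \<in> ?V E" "t \<noteq> t'" for t t'
    using that PiE_ext[of t E _ t'] by (auto simp: xor_solutions_def)
  have same_card: "card (xor_solutions k P E D t) = card (xor_solutions k P E D (\<lambda>_. 0))"
    if "t \<in> ?V E" for t
  proof -
    have "xor_solutions k P E D t \<noteq> {}"
      using that assms by (intro xor_solutions_nonempty) auto
    then show ?thesis using assms(3) card_xor_solutions_translate by blast
  qed
  have fin_sol: "finite (xor_solutions k P E D t)" for t
    using assms(2) by (simp add: xor_solutions_def finite_PiE)
  have "card (?V P) = (\<Sum>t\<in>?V E. card (xor_solutions k P E D t))"
    unfolding fibres
  proof (rule card_UN_disjoint)
    show "finite (?V E)" using assms(1) by (simp add: finite_PiE)
  qed (use fin_sol disjoint in blast)+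
  also have "\<dots> = card (?V E) * card (xor_solutions k P E D (\<lambda>_. 0))"
    using same_card by simp
  finally show ?thesis using assms(1,2) by (simp add: card_PiE mult.commute)
qed

lemma card_PiE_filter_override:
  assumes "finite A" "C \<subseteq> A" "\<And>a. a \<in> A \<Longrightarrow> finite (F a)"
  shows "card {f \<in> PiE A F. Q f}
       = (\<Sum>g\<in>PiE (A - C) F. card {h \<in> PiE C F. Q (override_on g h C)})"
proof -
  let ?pairs = "SIGMA g:PiE (A - C) F. {h \<in> PiE C F. Q (override_on g h C)}"
  have override_PiE: "override_on g h C \<in> PiE A F" if "g \<in> PiE (A - C) F" "h \<in> PiE C F" for g h
    using that assms(2) by (auto simp: override_on_def PiE_def Pi_def extensional_def)
  have override_restrict: "override_on (restrict f (A - C)) (restrict f C) C = f"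
    if "f \<in> PiE A F" for f
    using that assms(2) by (auto simp: override_on_def PiE_def extensional_def fun_eq_iff)
  have "bij_betw (\<lambda>(g, h). override_on g h C) ?pairs {f \<in> PiE A F. Q f}"
  proof (rule bij_betw_byWitness[where f' = "\<lambda>f. (restrict f (A - C), restrict f C)"])
    show "\<forall>p\<in>?pairs. (\<lambda>f. (restrict f (A - C), restrict f C)) ((\<lambda>(g, h). override_on g h C) p) = p"
      by (auto simp: override_on_def PiE_def extensional_def fun_eq_iff)
    show "(\<lambda>f. (restrict f (A - C), restrict f C)) ` {f \<in> PiE A F. Q f} \<subseteq> ?pairs"
      using override_restrict assms(2) by (auto simp: PiE_def Pi_def)
  qed (use override_PiE override_restrict in auto)
  then have "card {f \<in> PiE A F. Q f} = card ?pairs" by (simp add: bij_betw_same_card)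
  also have "\<dots> = (\<Sum>g\<in>PiE (A - C) F. card {h \<in> PiE C F. Q (override_on g h C)})"
  proof (rule card_SigmaI)
    have "finite (PiE X F)" if "X \<subseteq> A" for X
      using that assms(1,3) by (intro finite_PiE) (auto intro: finite_subset)
    then show "finite (PiE (A - C) F)"
      and "\<forall>g\<in>PiE (A - C) F. finite {h \<in> PiE C F. Q (override_on g h C)}"
      using assms(2) by auto
  qed
  finally show ?thesis .
qed

lemma length_ext [simp]: "length (ext T m x) = length x + m"
  by (induction m) (simp_all add: Let_def)

lemma take_ext: "m \<le> n \<Longrightarrow> take (length x + m) (ext T n x) = ext T m x"
proof (induction n)
  case (Suc n)
  then show ?case by (cases "m = Suc n") (simp_all add: Let_def)
qed simp

lemma nth_derived: "m < d \<Longrightarrow> derived T d x ! (length x + m) = htab T (Suc m) (ext T m x)"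
proof -
  assume "m < d"
  then have "take (length x + Suc m) (ext T d x) = ext T (Suc m) x" by (intro take_ext) simp
  then have "derived T d x ! (length x + m) = ext T (Suc m) x ! (length x + m)"
    by (metis derived_def lessI add_Suc_right nth_take)
  then show ?thesis by (simp add: Let_def nth_append)
qed

lemma ext_cong:
  assumes "\<And>l j a. 1 \<le> l \<Longrightarrow> l \<le> m \<Longrightarrow> T (l, j, a) = T' (l, j, a)"
  shows "ext T m x = ext T' m x"
  using assms
proof (induction m)
  case (Suc m)
  then have "ext T m x = ext T' m x" by simp
  moreover have "htab T (Suc m) y = htab T' (Suc m) y" for y
    using Suc.prems by (simp add: htab_def)
  ultimately show ?case by (simp add: Let_def)
qed simp

lemma finite_table_dom: "finite (table_dom k c d)"
proof (rule finite_subset)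
  show "table_dom k c d \<subseteq> {1..d} \<times> {1..c + d} \<times> Sigma_set k"
    by (auto simp: table_dom_def)
qed (simp add: Sigma_set_def)

definition table_entries :: "nat \<Rightarrow> (nat \<times> nat) set \<Rightarrow> (nat \<times> nat \<times> nat) set" where
  "table_entries i z = (\<lambda>(j, a). (i, j, a)) ` z"

lemma inj_table_entry: "inj (\<lambda>(j, a). (i::nat, j::nat, a::nat))"
  by (auto simp: inj_def)

lemma table_entries_symdiff:
  "table_entries i (symdiff A B) = symdiff (table_entries i A) (table_entries i B)"
  unfolding table_entries_def symdiff_def using inj_table_entry[of i]
  by (simp add: image_set_diff image_Un)

lemma finite_table_entries [simp]: "finite z \<Longrightarrow> finite (table_entries i z)"
  by (simp add: table_entries_def)

lemma pchars_eq_image: "pchars y = (\<lambda>j. (j, y ! (j - 1))) ` {1..length y}"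
  by (auto simp: pchars_def)

lemma finite_pchars [simp]: "finite (pchars y)"
  by (simp add: pchars_eq_image)

lemma pchars_subset: "y \<in> keys k n \<Longrightarrow> pchars y \<subseteq> {1..n} \<times> Sigma_set k"
  by (auto simp: pchars_def keys_def)

lemma foldr_xor_eq_xor_sum:
  "distinct js \<Longrightarrow> foldr (\<lambda>j acc. g j XOR acc) js 0 = xor_sum g (set js)"
  by (induction js) simp_all

lemma htab_eq_xor_sum: "htab T i y = xor_sum T (table_entries i (pchars y))"
proof -
  have "htab T i y = xor_sum (\<lambda>j. T (i, j, y ! (j - 1))) (set [1..<length y + 1])"
    unfolding htab_def by (rule foldr_xor_eq_xor_sum) simp
  also have "set [1..<length y + 1] = {1..length y}" by auto
  also have "xor_sum (\<lambda>j. T (i, j, y ! (j - 1))) {1..length y}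
      = xor_sum T ((\<lambda>j. (i, j, y ! (j - 1))) ` {1..length y})"
    using xor_sum.reindex[of "\<lambda>j. (i, j, y ! (j - 1))" "{1..length y}" T]
    by (simp add: comp_def inj_on_def)
  also have "(\<lambda>j. (i, j, y ! (j - 1))) ` {1..length y} = table_entries i (pchars y)"
    by (simp add: table_entries_def pchars_eq_image image_image)
  finally show ?thesis .
qed

lemma ext_in_keys:
  assumes "x \<in> keys k c" "T ` table_dom k c m \<subseteq> Sigma_set k"
  shows "ext T m x \<in> keys k (c + m)"
  using assms(2)
proof (induction m)
  case 0
  then show ?case using assms(1) by simp
next
  case (Suc m)
  have "table_dom k c m \<subseteq> table_dom k c (Suc m)" by (auto simp: table_dom_def)
  then have y: "ext T m x \<in> keys k (c + m)" using Suc by blast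
  have "table_entries (Suc m) (pchars (ext T m x)) \<subseteq> table_dom k c (Suc m)"
    using pchars_subset[OF y] by (auto simp: table_entries_def table_dom_def)
  then have "htab T (Suc m) (ext T m x) < 2 ^ k"
    unfolding htab_eq_xor_sum using Suc.prems
    by (intro xor_sum_less_power) (auto simp: Sigma_set_def)
  then show ?case using y by (simp add: keys_def Let_def Sigma_set_def)
qed

lemma partial_matching_keys:
  "partial_matching k c M \<Longrightarrow> {x, y} \<in> M \<Longrightarrow> x \<in> keys k c \<and> y \<in> keys k c"
  unfolding partial_matching_def by (metis doubleton_eq_iff)

lemma upto_pos_pchars: "upto_pos (pchars y) n = pchars (take n y)"
  by (auto simp: upto_pos_def pchars_def)

lemma upto_pos_symdiff: "upto_pos (symdiff A B) n = symdiff (upto_pos A n) (upto_pos B n)"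
  by (auto simp: upto_pos_def symdiff_def)

lemma diff_keys_eq_ext:
  assumes "partial_matching k c M" "m \<le> d"
  shows "diff_keys T c d M m
       = {symdiff (pchars (ext T m x)) (pchars (ext T m y)) | x y. {x, y} \<in> M}"
proof -
  have "upto_pos (pchars (derived T d x)) (c + m) = pchars (ext T m x)" if "x \<in> keys k c" for x
    using that take_ext[OF assms(2), of x T] by (simp add: keys_def derived_def upto_pos_pchars)
  then show ?thesis
    using partial_matching_keys[OF assms(1)] unfolding diff_keys_def
    by (auto simp: upto_pos_symdiff) (metis, metis)
qed

lemma diff_keys_cong:
  assumes "partial_matching k c M" "m \<le> d"
    and "\<And>l j a. 1 \<le> l \<Longrightarrow> l \<le> m \<Longrightarrow> T (l, j, a) = T' (l, j, a)"
  shows "diff_keys T c d M m = diff_keys T' c d M m"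
proof -
  have "ext T m x = ext T' m x" for x
    using assms(3) by (rule ext_cong)
  then show ?thesis by (simp add: diff_keys_eq_ext[OF assms(1,2)])
qed

lemma diff_keys_subset:
  assumes "partial_matching k c M" "m \<le> d" "T ` table_dom k c m \<subseteq> Sigma_set k"
    and "z \<in> diff_keys T c d M m"
  shows "z \<subseteq> {1..c + m} \<times> Sigma_set k"
  using assms(4) partial_matching_keys[OF assms(1)] pchars_subset[OF ext_in_keys[OF _ assms(3)]]
  unfolding diff_keys_eq_ext[OF assms(1,2)] symdiff_def by blast

lemma is_i_matching_iff_xor_sum:
  assumes "partial_matching k c M" "m < d"
  shows "is_i_matching T c d M (Suc m)
     \<longleftrightarrow> (\<forall>z\<in>diff_keys T c d M m. xor_sum T (table_entries (Suc m) z) = 0)"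
proof -
  have char: "derived T d x ! (c + m) = xor_sum T (table_entries (Suc m) (pchars (ext T m x)))"
    if "x \<in> keys k c" for x
  proof -
    have "length x = c" using that by (simp add: keys_def)
    then show ?thesis using nth_derived[OF assms(2), of T x] by (simp add: htab_eq_xor_sum)
  qed
  have pair: "derived T d x ! (c + Suc m - 1) = derived T d y ! (c + Suc m - 1)
      \<longleftrightarrow> xor_sum T (table_entries (Suc m)
            (symdiff (pchars (ext T m x)) (pchars (ext T m y)))) = 0"
    if "{x, y} \<in> M" for x y
    using partial_matching_keys[OF assms(1) that]
    by (simp add: char table_entries_symdiff xor_sum_symdiff xor_eq_0_iff)
  have "is_i_matching T c d M (Suc m) \<longleftrightarrow> (\<forall>x y. {x, y} \<in> M \<longrightarrow>
      xor_sum T (table_entries (Suc m) (symdiff (pchars (ext T m x)) (pchars (ext T m y)))) = 0)"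
    unfolding is_i_matching_def using pair by meson
  also have "\<dots> \<longleftrightarrow> (\<forall>z\<in>diff_keys T c d M m. xor_sum T (table_entries (Suc m) z) = 0)"
    unfolding diff_keys_eq_ext[OF assms(1) less_imp_le[OF assms(2)]] by auto
  finally show ?thesis .
qed

definition table_level :: "nat \<Rightarrow> nat \<Rightarrow> nat \<Rightarrow> (nat \<times> nat \<times> nat) set" where
  "table_level k c i = table_dom k c i - table_dom k c (i - 1)"

lemma mem_table_level_iff:
  "(l, j, a) \<in> table_level k c i
     \<longleftrightarrow> 1 \<le> i \<and> l = i \<and> 1 \<le> j \<and> j \<le> c + i - 1 \<and> a \<in> Sigma_set k"
  by (auto simp: table_level_def table_dom_def)

lemma diff_keys_override_table_level:
  assumes "partial_matching k c M" "m \<le> d"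
  shows "diff_keys (override_on g h (table_level k c (Suc m))) c d M m = diff_keys g c d M m"
  using assms by (rule diff_keys_cong) (simp add: mem_table_level_iff)

lemma is_j_independent_override_table_level:
  assumes "partial_matching k c M" "m \<le> d"
  shows "is_j_independent (override_on g h (table_level k c (Suc m))) c d M m
     \<longleftrightarrow> is_j_independent g c d M m"
  by (simp add: is_j_independent_def diff_keys_override_table_level[OF assms])

lemma card_matching_extensions:
  assumes pm: "partial_matching k c M" and "m < d"
    and g: "g \<in> PiE (table_dom k c d - table_level k c (Suc m)) (\<lambda>_. Sigma_set k)"
    and indep: "is_j_independent g c d M m"
  shows "card {h \<in> PiE (table_level k c (Suc m)) (\<lambda>_. Sigma_set k).
              is_i_matching (override_on g h (table_level k c (Suc m))) c d M (Suc m)}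
           * (2 ^ k) ^ card M
       = (2 ^ k) ^ card (table_level k c (Suc m))"
proof -
  let ?L = "table_level k c (Suc m)"
  let ?Z = "diff_keys g c d M m"
  have "table_dom k c m \<subseteq> table_dom k c d - ?L"
    using \<open>m < d\<close> by (auto simp: table_dom_def mem_table_level_iff)
  then have "g ` table_dom k c m \<subseteq> Sigma_set k" using g by blast
  then have Z_sub: "z \<subseteq> {1..c + m} \<times> Sigma_set k" if "z \<in> ?Z" for z
    using diff_keys_subset[OF pm _ _ that] \<open>m < d\<close> by simp
  have entries_sub: "table_entries (Suc m) z \<subseteq> ?L" if "z \<in> ?Z" for z
    using Z_sub[OF that] by (auto simp: table_entries_def mem_table_level_iff)
  have match_iff: "is_i_matching (override_on g h ?L) c d M (Suc m)
      \<longleftrightarrow> (\<forall>z\<in>?Z. xor_sum h (table_entries (Suc m) z) = 0)" for h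
  proof -
    have "xor_sum (override_on g h ?L) (table_entries (Suc m) z)
        = xor_sum h (table_entries (Suc m) z)"
      if "z \<in> ?Z" for z
      using entries_sub[OF that] by (intro xor_sum.cong) auto
    then show ?thesis
      unfolding is_i_matching_iff_xor_sum[OF pm \<open>m < d\<close>]
        diff_keys_override_table_level[OF pm less_imp_le[OF \<open>m < d\<close>]]
      by simp
  qed
  have "{h \<in> PiE ?L (\<lambda>_. Sigma_set k). is_i_matching (override_on g h ?L) c d M (Suc m)}
      = xor_solutions k ?L ?Z (table_entries (Suc m)) (\<lambda>_. 0)"
    by (simp only: xor_solutions_def match_iff Sigma_set_def)
  moreover have "card (xor_solutions k ?L ?Z (table_entries (Suc m)) (\<lambda>_. 0)) * (2 ^ k) ^ card ?Z
      = (2 ^ k) ^ card ?L"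
  proof (rule card_xor_solutions)
    have "?Z \<subseteq> Pow ({1..c + m} \<times> Sigma_set k)" using Z_sub by blast
    then show "finite ?Z" by (rule finite_subset) (simp add: Sigma_set_def)
    show "finite ?L" using finite_table_dom by (simp add: table_level_def)
    have "lin_indep_family ?Z id"
      using indep by (simp add: is_j_independent_def lin_indep_family_id_iff)
    from lin_indep_family_image[OF inj_table_entry this]
    show "lin_indep_family ?Z (table_entries (Suc m))"
      by (simp add: table_entries_def[abs_def])
  qed (use entries_sub in blast)
  moreover have "card ?Z = card M" using indep by (simp add: is_j_independent_def)
  ultimately show ?thesis by metis
qed

lemma card_tables_independent_matching:
  assumes pm: "partial_matching k c M" and "m < d"
  shows "card {T \<in> tables k c d. is_j_independent T c d M m \<and> is_i_matching T c d M (Suc m)}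
           * (2 ^ k) ^ card M
       = card {T \<in> tables k c d. is_j_independent T c d M m}"
proof -
  let ?L = "table_level k c (Suc m)"
  let ?G = "PiE (table_dom k c d - ?L) (\<lambda>_. Sigma_set k)"
  let ?H = "PiE ?L (\<lambda>_. Sigma_set k)"
  have split: "card {T \<in> tables k c d. Q T} = (\<Sum>g\<in>?G. card {h \<in> ?H. Q (override_on g h ?L)})"
    for Q
    unfolding tables_def using \<open>m < d\<close>
    by (intro card_PiE_filter_override finite_table_dom)
      (auto simp: Sigma_set_def table_level_def table_dom_def)
  have card_H: "card ?H = (2 ^ k) ^ card ?L"
    using finite_table_dom by (simp add: card_PiE table_level_def Sigma_set_def)
  have indep_iff:
    "is_j_independent (override_on g h ?L) c d M m \<longleftrightarrow> is_j_independent g c d M m" for g h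
    using is_j_independent_override_table_level[OF pm] \<open>m < d\<close> by simp
  have "card {h \<in> ?H. is_j_independent (override_on g h ?L) c d M m
          \<and> is_i_matching (override_on g h ?L) c d M (Suc m)} * (2 ^ k) ^ card M
      = card {h \<in> ?H. is_j_independent (override_on g h ?L) c d M m}" if "g \<in> ?G" for g
  proof (cases "is_j_independent g c d M m")
    case True
    then show ?thesis
      using card_matching_extensions[OF pm \<open>m < d\<close> that True] card_H by (simp add: indep_iff)
  qed (simp add: indep_iff)
  then show ?thesis by (simp add: split sum_distrib_right)
qed

lemma finite_tables: "finite (tables k c d)"
  by (simp add: tables_def finite_table_dom finite_PiE Sigma_set_def)

lemma tables_nonempty: "tables k c d \<noteq> {}"
proof -
  have "restrict (\<lambda>_. 0) (table_dom k c d) \<in> tables k c d"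
    by (simp add: tables_def Sigma_set_def)
  then show ?thesis by blast
qed

lemma prob_tornado_pmf:
  "measure_pmf.prob (tornado_pmf k c d) {T. Q T}
     = card {T \<in> tables k c d. Q T} / card (tables k c d)"
  unfolding tornado_pmf_def using finite_tables tables_nonempty
  by (simp add: measure_pmf_of_set Int_def)

theorem lemma3p1:
  fixes k c d i :: nat and M :: "nat list set set"
  assumes "partial_matching k c M"
    and "1 \<le> i" and "i \<le> d"
    and "measure_pmf.prob (tornado_pmf k c d) {T. is_j_independent T c d M (i - 1)} > 0"
  shows "measure_pmf.prob (tornado_pmf k c d)
             {T. is_j_independent T c d M (i - 1) \<and> is_i_matching T c d M i}
         / measure_pmf.prob (tornado_pmf k c d) {T. is_j_independent T c d M (i - 1)}
       = 1 / real (card (Sigma_set k)) ^ card M"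
proof -
  obtain m where i: "i = Suc m" and "m < d" using assms(2,3) by (cases i) auto
  let ?indep = "{T \<in> tables k c d. is_j_independent T c d M m}"
  let ?both = "{T \<in> tables k c d. is_j_independent T c d M m \<and> is_i_matching T c d M (Suc m)}"
  have "card ?both * (2 ^ k) ^ card M = card ?indep"
    by (rule card_tables_independent_matching[OF assms(1) \<open>m < d\<close>])
  then have "real (card ?both * (2 ^ k) ^ card M) = real (card ?indep)"
    by (rule arg_cong)
  then have "real (card ?both) * (2 ^ k) ^ card M = real (card ?indep)"
    by simp
  moreover have "card ?indep \<noteq> 0"
    using assms(4) i by (simp add: prob_tornado_pmf zero_less_divide_iff)
  moreover have "card (tables k c d) \<noteq> 0"
    using finite_tables tables_nonempty by simp
  ultimately show ?thesis
    unfolding i diff_Suc_1 prob_tornado_pmf by (simp add: Sigma_set_def field_simps)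
qed

end
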